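(* Consider an $n$-link rigid manipulator with only rotational joints, $\boldsymbol\tau=H(\mathbf q)\ddot{\mathbf q}+C(\mathbf q,\dot{\mathbf q})\dot{\mathbf q}+\mathbf g(\mathbf q)$, satisfying the following assumptions: (P1) $H(\mathbf q)$ is symmetric positive definite and $\dot H(\mathbf q)-2C(\mathbf q,\dot{\mathbf q})$ is skew-symmetric; (P2) $\|H(\mathbf q)\|<\infty$, $\|H(\mathbf q)-H(\mathbf q')\|\le L\|\mathbf q-\mathbf q'\|$ for some $L>0$; $\|C(\mathbf q,\dot{\mathbf q})\|\le c_C\|\dot{\mathbf q}\|$ and $C(\mathbf q,\dot{\mathbf q})\dot{\mathbf p}=C(\mathbf q,\dot{\mathbf p})\dot{\mathbf q}$ for all $\mathbf q,\mathbf q',\dot{\mathbf q},\dot{\mathbf p}$; (C1) $\|\mathbf q_d\|<c_q$, $\|\dot{\mathbf q}_d\|<c_{\dot q}$, $\|\ddot{\mathbf q}_d\|<c_{\ddot q}$; (C2) $K_p,K_d$ positive definite with $\sigma_{\min}(K_d)>\beta$; (C3) $\|H(\mathbf q)\ddot{\mathbf q}_d+C(\mathbf q,\dot{\mathbf q})\dot{\mathbf q}_d+\mathbf g(\mathbf q)-\hat H(\mathbf q)\ddot{\mathbf q}_d-\hat C(\mathbf q,\dot{\mathbf q})\dot{\mathbf q}_d-\hat{\mathbf g}(\mathbf q)\|\le\alpha+\beta\|\dot{\mathbf q}\|$ for all $\mathbf q,\dot{\mathbf q}$ with $\alpha,\beta\ge0$, this model error being continuous in $(\ddot{\mathbf q}_d,\dot{\mathbf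 q}_d,\dot{\mathbf q},\mathbf q)$. Apply the deterministic control law $$\boldsymbol\tau=\hat H(\mathbf q)\ddot{\mathbf q}_d+\hat C(\mathbf q,\dot{\mathbf q})\dot{\mathbf q}_d+\hat{\mathbf g}(\mathbf q)+\boldsymbol\mu(\mathbf q_c)-K_d\dot{\mathbf e}-K_p\mathbf e,$$ with $\mathbf e=\mathbf q-\mathbf q_d$, $\mathbf q_c=[\ddot{\mathbf q}_d^\top,\dot{\mathbf q}_d^\top,\mathbf q^\top]^\top$ and $\boldsymbol\mu=[\mu_1,\dots,\mu_n]^\top$ the posterior mean functions of $n$ Gaussian processes with squared exponential kernel. Then the tracking error $\mathbf e$ is bounded.
   Context: For $i=1,\dots,n$, $\mu_i(\mathbf x^* )=\mathbf k_{\varphi_i}(\mathbf x^*,X)^\top(K_{\varphi_i}(X,X)+\sigma_{n,i}^2I_m)^{-1}Y_{:,i}$ is the posterior mean of a zero-mean GP with squared exponential kernel $k_{\varphi_i}(\mathbf x,\mathbf x')=\sigma_{f,i}^2\exp(-\|\mathbf x-\mathbf x'\|^2/(2\lambda_i^2))$, conditioned on $m$ training inputs $X=[\mathbf x_1,\dots,\mathbf x_m]$ and outputs $Y_{:,i}$, with noise variance $\sigma_{n,i}^2\ge0$; $K_{\varphi_i}(X,X)$ is the Gram matrix on training inputs and $\mathbf k_{\varphi_i}(\mathbf x^*,X)$ the vector of kernel evaluations between $\mathbf x^*$ and the training inputs. $\hat H,\hat C,\hat{\mathbf g}$ are given estimates of $H,C,\mathbf g$, and $\sigma_{\min}$ denotes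 the smallest singular value. *)

theory Defs
  imports "HOL-Analysis.Analysis"
begin

definition se_kernel :: "real \<Rightarrow> real \<Rightarrow> 'a::real_normed_vector \<Rightarrow> 'a \<Rightarrow> real" where
  "se_kernel sf lam x x' = sf^2 * exp (- ((norm (x - x'))\<^sup>2) / (2 * lam\<^sup>2))"

text \<open>Posterior mean of a zero-mean GP with SE kernel, training inputs X (indexed by the
  finite type 'm of training points), training outputs y, noise standard deviation sn.\<close>
definition gp_mean :: "real \<Rightarrow> real \<Rightarrow> real \<Rightarrow> ('m::finite \<Rightarrow> 'a::real_normed_vector)
    \<Rightarrow> real^'m \<Rightarrow> 'a \<Rightarrow> real" where
  "gp_mean sf lam sn X y x =
     (\<chi> j. se_kernel sf lam x (X j)) \<bullet>
     (matrix_inv ((\<chi> j k. se_kernel sf lam (X j) (X k)) + (sn^2) *\<^sub>R mat 1) *v y)"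

definition gp_mean_vec :: "('n \<Rightarrow> real) \<Rightarrow> ('n \<Rightarrow> real) \<Rightarrow> ('n \<Rightarrow> real)
    \<Rightarrow> ('m::finite \<Rightarrow> 'a::real_normed_vector) \<Rightarrow> ('m \<Rightarrow> real^'n) \<Rightarrow> 'a \<Rightarrow> real^'n" where
  "gp_mean_vec sf lam sn X Y x = (\<chi> i. gp_mean (sf i) (lam i) (sn i) X (\<chi> j. Y j $ i) x)"

definition mnorm :: "real^'n^'m \<Rightarrow> real" where
  "mnorm A = onorm (\<lambda>x. A *v x)"

definition sym_pos_def :: "real^'n^'n \<Rightarrow> bool" where
  "sym_pos_def A \<longleftrightarrow> transpose A = A \<and> (\<forall>x. x \<noteq> 0 \<longrightarrow> x \<bullet> (A *v x) > 0)"

definition skew_sym :: "real^'n^'n \<Rightarrow> bool" where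
  "skew_sym A \<longleftrightarrow> transpose A = - A"

definition sigma_min :: "real^'n^'n \<Rightarrow> real" where
  "sigma_min A = sqrt (Inf {l. \<exists>v. v \<noteq> 0 \<and> (transpose A ** A) *v v = l *\<^sub>R v})"

end

theory Submission
  imports Defs
begin

(* Lyapunov argument for the tracking error e = q - qd, with e1 = de/dt.  Take
     V = e1^T H e1 + e^T Kp e + eps sat(e)^T H e1,   sat(e) = e / sqrt (1 + |e|^2).
   Along the closed loop, the skew-symmetry of dH/dt - 2C cancels the Coriolis terms, and the
   remaining disturbance (model error plus compensation) grows at most like const + beta |e1|,
   because the model error is bounded by alpha + beta |q1| and the GP posterior mean with a
   squared exponential kernel is bounded.  For small eps this gives
     dV/dt <= -(sigma_min Kd - beta) |e1|^2 + O(|e1|) + O(eps)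
              - eps lambda_min Kp |e|^2 / sqrt (1 + |e|^2),
   which is negative outside a bounded box of (|e1|, |e|).  Hence V stays bounded, and since
   V >= lambda_min Kp |e|^2 - O(eps^2), so does e. *)

lemma inner_matrix_vector_transpose:
  fixes A :: "real^'n^'m"
  shows "x \<bullet> (A *v y) = (transpose A *v x) \<bullet> y"
  by (simp add: dot_lmul_matrix)

lemma inner_matrix_vector_sym:
  fixes A :: "real^'n^'n"
  assumes "transpose A = A"
  shows "x \<bullet> (A *v y) = y \<bullet> (A *v x)"
  using inner_matrix_vector_transpose[of x A y] assms by (simp add: inner_commute)

lemma bounded_bilinear_matrix_vector_mult:
  "bounded_bilinear (\<lambda>(A::real^'n^'m) (v::real^'n). A *v v)"
proof -
  have "bilinear (\<lambda>(A::real^'n^'m) (v::real^'n). A *v v)"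
    unfolding bilinear_def
    by (auto simp: linear_iff matrix_vector_mult_add_rdistrib matrix_vector_right_distrib
        scaleR_matrix_vector_assoc matrix_vector_mult_scaleR)
  then show ?thesis by (simp add: bilinear_conv_bounded_bilinear)
qed

lemma bounded_linear_transpose: "bounded_linear (transpose :: real^'n^'m \<Rightarrow> real^'m^'n)"
  by (intro linear_conv_bounded_linear[THEN iffD1])
    (auto simp: linear_iff transpose_def vec_eq_iff)

lemma norm_matrix_vector_le_mnorm: "norm (A *v x) \<le> mnorm A * norm x"
  unfolding mnorm_def by (rule onorm[OF matrix_vector_mul_bounded_linear])

lemma mnorm_nonneg: "0 \<le> mnorm A"
  unfolding mnorm_def by (rule onorm_pos_le[OF matrix_vector_mul_bounded_linear])

lemma abs_inner_matrix_vector_le: "\<bar>a \<bullet> (A *v b)\<bar> \<le> mnorm A * norm a * norm b"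
proof -
  have "\<bar>a \<bullet> (A *v b)\<bar> \<le> norm a * norm (A *v b)" by (rule Cauchy_Schwarz_ineq2)
  also have "\<dots> \<le> norm a * (mnorm A * norm b)"
    by (simp add: mult_left_mono norm_matrix_vector_le_mnorm)
  finally show ?thesis by (simp add: mult_ac)
qed

lemma matrix_vector_mult_uminus_left: "(- A) *v x = - (A *v x)" for A :: "real^'n^'m"
  by (simp add: matrix_vector_mult_def vec_eq_iff sum_negf)

lemma skew_sym_split_inner:
  fixes D C :: "real^'n^'n"
  assumes sym: "transpose D = D" and skew: "skew_sym (D - 2 *\<^sub>R C)"
  shows "u \<bullet> (D *v v) = u \<bullet> (C *v v) + v \<bullet> (C *v u)"
proof -
  have "u \<bullet> ((D - 2 *\<^sub>R C) *v v) = (transpose (D - 2 *\<^sub>R C) *v u) \<bullet> v"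
    by (rule inner_matrix_vector_transpose)
  also have "\<dots> = - (((D - 2 *\<^sub>R C) *v u) \<bullet> v)"
    using skew unfolding skew_sym_def
    by (simp only: matrix_vector_mult_uminus_left inner_minus_left)
  finally have "u \<bullet> (D *v v) - 2 * (u \<bullet> (C *v v)) = - (v \<bullet> (D *v u)) + 2 * (v \<bullet> (C *v u))"
    by (simp add: matrix_vector_mult_diff_rdistrib scaleR_matrix_vector_assoc[symmetric]
        inner_diff_right inner_diff_left inner_commute)
  moreover have "v \<bullet> (D *v u) = u \<bullet> (D *v v)" by (rule inner_matrix_vector_sym[OF sym])
  ultimately show ?thesis by linarith
qed

lemma sym_pos_def_psd: "sym_pos_def A \<Longrightarrow> 0 \<le> x \<bullet> (A *v x)"
  by (cases "x = 0") (auto simp: sym_pos_def_def less_imp_le)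

lemma psd_quadratic_form_eq_0_imp:
  fixes A :: "real^'n^'n"
  assumes sym: "transpose A = A" and psd: "\<And>y. 0 \<le> y \<bullet> (A *v y)" and zero: "x \<bullet> (A *v x) = 0"
  shows "A *v x = 0"
proof -
  have "y \<bullet> (A *v x) = 0" for y
  proof (rule ccontr)
    define c where "c = y \<bullet> (A *v x)"
    define d where "d = y \<bullet> (A *v y)"
    assume "y \<bullet> (A *v x) \<noteq> 0"
    then have "c \<noteq> 0" by (simp add: c_def)
    have "0 \<le> d" using psd by (simp add: d_def)
    have "0 \<le> (x + s *\<^sub>R y) \<bullet> (A *v (x + s *\<^sub>R y))" for s using psd by blast
    also have "(x + s *\<^sub>R y) \<bullet> (A *v (x + s *\<^sub>R y)) = 2 * s * c + s\<^sup>2 * d" for s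
      using zero inner_matrix_vector_sym[OF sym, of x y]
      by (simp add: c_def d_def algebra_simps inner_add_left inner_add_right power2_eq_square)
    finally have nonneg: "0 \<le> 2 * s * c + s\<^sup>2 * d" for s .
    \<comment> \<open>a nonnegative quadratic in \<open>s\<close> vanishing at \<open>0\<close> has slope \<open>0\<close> there; refute this at \<open>s = -c/(d+1)\<close>\<close>
    define s where "s = 1 / (d + 1)"
    have "0 < s" "s * d = 1 - s" using \<open>0 \<le> d\<close> by (simp_all add: s_def field_simps)
    have "2 * (- c * s) * c + (- c * s)\<^sup>2 * d = c\<^sup>2 * s * (s * d - 2)"
      by (simp add: power2_eq_square algebra_simps)
    moreover have "c\<^sup>2 * s * (s * d - 2) < 0"
      using \<open>c \<noteq> 0\<close> \<open>0 < s\<close> \<open>s * d = 1 - s\<close> by (intro mult_pos_neg) auto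
    ultimately show False using nonneg[of "- c * s"] by linarith
  qed
  from this[of "A *v x"] show ?thesis by simp
qed

lemma eigenvalue_transpose_mult_nonneg:
  fixes K :: "real^'n^'n"
  assumes "v \<noteq> 0" and "(transpose K ** K) *v v = m *\<^sub>R v"
  shows "0 \<le> m"
proof -
  have "m * (v \<bullet> v) = (K *v v) \<bullet> (K *v v)"
    using assms(2) inner_matrix_vector_transpose[of v "transpose K" "K *v v"]
    by (simp add: matrix_vector_mul_assoc[symmetric])
  then have "0 \<le> m * (v \<bullet> v)" by simp
  moreover have "0 < v \<bullet> v" using assms(1) by simp
  ultimately show ?thesis by (simp add: zero_le_mult_iff)
qed

lemma sigma_min_le_eigenvalue:
  fixes K :: "real^'n^'n"
  assumes "v \<noteq> 0" and "(transpose K ** K) *v v = m *\<^sub>R v"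
  shows "sigma_min K \<le> sqrt m"
  unfolding sigma_min_def
proof (rule real_sqrt_le_mono, rule cInf_lower)
  show "m \<in> {l. \<exists>v. v \<noteq> 0 \<and> (transpose K ** K) *v v = l *\<^sub>R v}" using assms by blast
  show "bdd_below {l. \<exists>v. v \<noteq> 0 \<and> (transpose K ** K) *v v = l *\<^sub>R v}"
    by (rule bdd_belowI[of _ 0]) (auto intro: eigenvalue_transpose_mult_nonneg)
qed

lemma sym_pos_def_min_on_sphere:
  fixes K :: "real^'n^'n"
  assumes "sym_pos_def K"
  obtains x0 where "norm x0 = 1" "0 < x0 \<bullet> (K *v x0)"
    "\<And>x. (x0 \<bullet> (K *v x0)) * (norm x)\<^sup>2 \<le> x \<bullet> (K *v x)"
proof -
  have "axis undefined 1 \<in> sphere (0::real^'n) 1" by simp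
  then have ne: "sphere (0::real^'n) 1 \<noteq> {}" by blast
  have "continuous_on (sphere 0 1) (\<lambda>x::real^'n. x \<bullet> (K *v x))"
    by (intro continuous_intros linear_continuous_on matrix_vector_mul_bounded_linear)
  then obtain x0 where x0: "x0 \<in> sphere 0 1" and min: "\<And>y. y \<in> sphere 0 1 \<Longrightarrow> x0 \<bullet> (K *v x0) \<le> y \<bullet> (K *v y)"
    using continuous_attains_inf[OF compact_sphere ne] by blast
  have "norm x0 = 1" using x0 by simp
  then have "x0 \<noteq> 0" by auto
  then have "0 < x0 \<bullet> (K *v x0)" using assms by (auto simp: sym_pos_def_def)
  moreover have "(x0 \<bullet> (K *v x0)) * (norm x)\<^sup>2 \<le> x \<bullet> (K *v x)" for x
  proof (cases "x = 0")
    case False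
    define u where "u = (1 / norm x) *\<^sub>R x"
    have "u \<in> sphere 0 1" using False by (simp add: u_def)
    then have "x0 \<bullet> (K *v x0) \<le> u \<bullet> (K *v u)" by (rule min)
    also have "u \<bullet> (K *v u) = (x \<bullet> (K *v x)) / (norm x)\<^sup>2"
      by (simp add: u_def matrix_vector_mult_scaleR power2_eq_square)
    finally show ?thesis using False by (simp add: pos_le_divide_eq)
  qed simp
  ultimately show ?thesis using \<open>norm x0 = 1\<close> that by blast
qed

text \<open>The minimum of the quadratic form on the unit sphere is an eigenvalue of \<open>K\<close>,
  so it bounds the smallest singular value from above.\<close>
lemma sym_pos_def_coercive:
  fixes K :: "real^'n^'n"
  assumes "sym_pos_def K"
  obtains l where "0 < l" "\<And>x. l * (norm x)\<^sup>2 \<le> x \<bullet> (K *v x)" "sigma_min K \<le> l"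
proof -
  obtain x0 where x0: "norm x0 = 1" "0 < x0 \<bullet> (K *v x0)"
    and lower: "\<And>x. (x0 \<bullet> (K *v x0)) * (norm x)\<^sup>2 \<le> x \<bullet> (K *v x)"
    using sym_pos_def_min_on_sphere[OF assms] by blast
  define l where "l = x0 \<bullet> (K *v x0)"
  have sym: "transpose K = K" using assms by (simp add: sym_pos_def_def)
  have Av: "(K - l *\<^sub>R mat 1) *v y = K *v y - l *\<^sub>R y" for y
    by (simp add: matrix_vector_mult_diff_rdistrib scaleR_matrix_vector_assoc[symmetric])
  have "(K - l *\<^sub>R mat 1) *v x0 = 0"
  proof (rule psd_quadratic_form_eq_0_imp)
    show "transpose (K - l *\<^sub>R mat 1) = K - l *\<^sub>R mat 1"
      using sym by (simp add: transpose_def vec_eq_iff mat_def)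
    show "0 \<le> y \<bullet> ((K - l *\<^sub>R mat 1) *v y)" for y
      using lower[of y] by (simp add: Av inner_diff_right power2_norm_eq_inner flip: l_def)
    show "x0 \<bullet> ((K - l *\<^sub>R mat 1) *v x0) = 0"
      using x0(1) by (simp add: Av inner_diff_right power2_norm_eq_inner[symmetric] flip: l_def)
  qed
  then have "K *v x0 = l *\<^sub>R x0" by (simp add: Av)
  then have "(transpose K ** K) *v x0 = l\<^sup>2 *\<^sub>R x0"
    using sym by (simp add: matrix_vector_mul_assoc[symmetric] matrix_vector_mult_scaleR power2_eq_square)
  then have "sigma_min K \<le> sqrt (l\<^sup>2)"
    using x0(1) by (intro sigma_min_le_eigenvalue) auto
  then show ?thesis using that x0(2) lower unfolding l_def by simp
qed

lemma at_within_atLeast_nonbot: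
  assumes "0 \<le> t"
  shows "at t within {0..} \<noteq> (bot :: real filter)"
proof -
  have "{t<..} \<subseteq> {0..}" using assms by auto
  then have "at_right t \<le> at t within {0..}" by (rule at_le)
  then show ?thesis using trivial_limit_at_right_real[of t] bot_unique by metis
qed

lemma has_vector_derivative_comp_has_derivative:
  assumes "(f has_vector_derivative f') (at t within S)" and "(g has_derivative g') (at (f t))"
  shows "((\<lambda>t. g (f t)) has_vector_derivative g' f') (at t within S)"
  using vector_derivative_diff_chain_within[OF assms(1) has_derivative_at_withinI[OF assms(2)]]
  by (simp add: o_def)

lemma has_real_derivative_inner_matrix_vector:
  fixes a b :: "real \<Rightarrow> real^'n" and M :: "real \<Rightarrow> real^'n^'n"
  assumes "(a has_vector_derivative a') (at t within S)"
    and "(M has_vector_derivative M') (at t within S)"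
    and "(b has_vector_derivative b') (at t within S)"
  shows "((\<lambda>t. a t \<bullet> (M t *v b t)) has_real_derivative
           a' \<bullet> (M t *v b t) + a t \<bullet> (M' *v b t) + a t \<bullet> (M t *v b')) (at t within S)"
proof -
  have "((\<lambda>t. M t *v b t) has_vector_derivative M t *v b' + M' *v b t) (at t within S)"
    using bounded_bilinear.has_vector_derivative[OF bounded_bilinear_matrix_vector_mult assms(2,3)] .
  from bounded_bilinear.has_vector_derivative[OF bounded_bilinear_inner assms(1) this]
  show ?thesis
    by (simp add: has_real_derivative_iff_has_vector_derivative inner_add_right algebra_simps)
qed

definition sat :: "'a::real_inner \<Rightarrow> 'a" where
  "sat x = inverse (sqrt (1 + x \<bullet> x)) *\<^sub>R x"

definition sat_deriv :: "'a::real_inner \<Rightarrow> 'a \<Rightarrow> 'a" where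
  "sat_deriv x v = inverse (sqrt (1 + x \<bullet> x)) *\<^sub>R v - ((x \<bullet> v) / sqrt (1 + x \<bullet> x) ^ 3) *\<^sub>R x"

lemma norm_sat: "norm (sat x) = norm x / sqrt (1 + (norm x)\<^sup>2)"
  by (simp add: sat_def power2_norm_eq_inner inverse_eq_divide)

lemma norm_sat_le_1: "norm (sat x) \<le> 1"
  unfolding norm_sat by (simp add: add_pos_nonneg divide_le_eq_1 real_le_rsqrt)

lemma has_vector_derivative_sat:
  fixes f :: "real \<Rightarrow> 'a::real_inner"
  assumes f: "(f has_vector_derivative v) (at t within S)"
  shows "((\<lambda>t. sat (f t)) has_vector_derivative sat_deriv (f t) v) (at t within S)"
proof -
  define s where "s = sqrt (1 + f t \<bullet> f t)"
  have pos: "0 < 1 + f t \<bullet> f t" by (simp add: add_pos_nonneg)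
  then have "0 < s" by (simp add: s_def)
  have "((\<lambda>t. f t \<bullet> f t) has_real_derivative 2 * (f t \<bullet> v)) (at t within S)"
    using bounded_bilinear.has_vector_derivative[OF bounded_bilinear_inner f f]
    by (simp add: has_real_derivative_iff_has_vector_derivative inner_commute)
  from DERIV_add[OF DERIV_const this]
  have "((\<lambda>t. 1 + f t \<bullet> f t) has_real_derivative 2 * (f t \<bullet> v)) (at t within S)"
    by simp
  from DERIV_chain2[OF _ this, OF DERIV_real_sqrt[OF pos], unfolded s_def[symmetric]]
  have "((\<lambda>t. sqrt (1 + f t \<bullet> f t)) has_real_derivative (f t \<bullet> v) / s) (at t within S)"
    by (simp add: inverse_eq_divide)
  from DERIV_inverse'[OF this, unfolded s_def[symmetric]]
  have "((\<lambda>t. inverse (sqrt (1 + f t \<bullet> f t))) has_real_derivative - ((f t \<bullet> v) / s ^ 3))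
      (at t within S)"
    using \<open>0 < s\<close> by (simp add: power3_eq_cube inverse_eq_divide)
  from has_vector_derivative_scaleR[OF this f] show ?thesis
    by (simp add: sat_def sat_deriv_def s_def)
qed

text \<open>\<open>sat\<close> is 1-Lipschitz: its derivative is \<open>(v - c x) / s\<close> with \<open>s = \<surd>(1 + \<parallel>x\<parallel>\<^sup>2) \<ge> 1\<close>
  and \<open>c = (x \<bullet> v) / s\<^sup>2\<close>, and \<open>\<parallel>v - c x\<parallel>\<^sup>2 = \<parallel>v\<parallel>\<^sup>2 - c (x \<bullet> v) (2 - \<parallel>x\<parallel>\<^sup>2 / s\<^sup>2) \<le> \<parallel>v\<parallel>\<^sup>2\<close>.\<close>
lemma norm_sat_deriv_le: "norm (sat_deriv x v) \<le> norm v"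
proof -
  define s where "s = sqrt (1 + x \<bullet> x)"
  define c where "c = (x \<bullet> v) / s\<^sup>2"
  have s1: "1 \<le> s" by (simp add: s_def)
  have "0 \<le> x \<bullet> x" by simp
  then have s2: "s\<^sup>2 = 1 + (norm x)\<^sup>2" by (simp add: s_def power2_norm_eq_inner)
  have "(x \<bullet> v) / s ^ 3 = inverse s * c"
    using s1 by (simp add: c_def power3_eq_cube power2_eq_square field_simps)
  then have eq: "sat_deriv x v = inverse s *\<^sub>R (v - c *\<^sub>R x)"
    by (simp add: sat_deriv_def scaleR_diff_right flip: s_def)
  have expand: "(norm (v - c *\<^sub>R x))\<^sup>2 = (norm v)\<^sup>2 - 2 * (c * (x \<bullet> v)) + c\<^sup>2 * (norm x)\<^sup>2"
    unfolding power2_norm_eq_inner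
    by (simp add: inner_diff_left inner_diff_right inner_commute power2_eq_square algebra_simps)
  have "c * (x \<bullet> v) = (x \<bullet> v)\<^sup>2 / s\<^sup>2" by (simp add: c_def power2_eq_square)
  then have "0 \<le> c * (x \<bullet> v)" by simp
  have "c\<^sup>2 * (norm x)\<^sup>2 = c * (x \<bullet> v) * ((norm x)\<^sup>2 / s\<^sup>2)"
    using s1 by (simp add: c_def power2_eq_square)
  also have "\<dots> \<le> c * (x \<bullet> v) * 1"
    using s2 \<open>0 \<le> c * (x \<bullet> v)\<close>
    by (intro mult_left_mono) (auto simp: divide_le_eq_1 add_pos_nonneg)
  finally have "(norm (v - c *\<^sub>R x))\<^sup>2 \<le> (norm v)\<^sup>2"
    using expand \<open>0 \<le> c * (x \<bullet> v)\<close> by linarith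
  then have "norm (v - c *\<^sub>R x) \<le> norm v" by (simp add: power2_le_iff_abs_le)
  have "norm (sat_deriv x v) = inverse s * norm (v - c *\<^sub>R x)" using s1 by (simp add: eq)
  also have "\<dots> \<le> norm (v - c *\<^sub>R x)" using s1 by (intro mult_left_le_one_le) (auto simp: inverse_le_1_iff)
  finally show ?thesis using \<open>norm (v - c *\<^sub>R x) \<le> norm v\<close> by linarith
qed

lemma le_max_if_deriv_neg_above:
  fixes W W' :: "real \<Rightarrow> real"
  assumes deriv: "\<And>t. t \<ge> 0 \<Longrightarrow> (W has_real_derivative W' t) (at t within {0..})"
    and neg: "\<And>t. t \<ge> 0 \<Longrightarrow> W t > R \<Longrightarrow> W' t < 0"
    and "t1 \<ge> 0"
  shows "W t1 \<le> max (W 0) R"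
proof (rule ccontr)
  define m where "m = max (W 0) R"
  assume "\<not> W t1 \<le> max (W 0) R"
  then have "m < W t1" unfolding m_def by (rule not_le_imp_less)
  have cont: "continuous_on {0..} W"
    by (rule DERIV_continuous_on) (use deriv in auto)
  \<comment> \<open>\<open>t0\<close> is the last time before \<open>t1\<close> at which \<open>W \<le> m\<close>\<close>
  define S where "S = {0..t1} \<inter> W -` {..m}"
  have "closed S"
    unfolding S_def by (rule continuous_closed_preimage) (auto intro: continuous_on_subset[OF cont])
  then have "compact S" by (simp add: S_def compact_eq_bounded_closed bounded_Int)
  moreover have "0 \<in> S" using \<open>t1 \<ge> 0\<close> by (simp add: S_def m_def)
  ultimately obtain t0 where "t0 \<in> S" and last: "\<And>s. s \<in> S \<Longrightarrow> s \<le> t0"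
    using compact_attains_sup by (metis empty_iff)
  then have t0: "0 \<le> t0" "t0 \<le> t1" "W t0 \<le> m" by (auto simp: S_def)
  with \<open>m < W t1\<close> have "t0 < t1" by (cases "t0 = t1") auto
  have above: "m < W s" if "t0 < s" "s \<le> t1" for s
    using last[of s] that t0 by (force simp: S_def)
  have deriv_at: "(W has_derivative (*) (W' s)) (at s)" if "t0 < s" "s < t1" for s
  proof -
    have "at s within {0..} = at s" using that t0 by (intro at_within_interior) auto
    then show ?thesis using deriv[of s] that t0 by (simp add: has_field_derivative_imp_has_derivative)
  qed
  have "continuous_on {t0..t1} W" using t0 by (intro continuous_on_subset[OF cont]) auto
  then obtain \<xi> where \<xi>: "t0 < \<xi>" "\<xi> < t1" "W t1 - W t0 = W' \<xi> * (t1 - t0)"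
    using mvt[OF \<open>t0 < t1\<close> _ deriv_at] by blast
  have "W' \<xi> < 0" using neg above[of \<xi>] \<xi> t0 by (simp add: m_def)
  then have "W' \<xi> * (t1 - t0) < 0" using \<open>t0 < t1\<close> by (simp add: mult_neg_pos)
  then show False using \<xi> t0 \<open>m < W t1\<close> by linarith
qed

lemma linear_minus_square_le: "0 < a \<Longrightarrow> b * x - a * x\<^sup>2 \<le> b\<^sup>2 / (4 * a)" for a b x :: real
proof -
  assume "0 < a"
  have "0 \<le> (2 * a * x - b)\<^sup>2" by simp
  then have "4 * a * (b * x - a * x\<^sup>2) \<le> b\<^sup>2" by (simp add: power2_eq_square algebra_simps)
  then show ?thesis using \<open>0 < a\<close> by (simp add: le_divide_eq mult.commute)
qed

lemma diff_1_le_square_div_sqrt: "0 \<le> y \<Longrightarrow> y - 1 \<le> y\<^sup>2 / sqrt (1 + y\<^sup>2)" for y :: real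
proof -
  assume "0 \<le> y"
  have "sqrt (1 + y\<^sup>2) \<le> 1 + y"
    using \<open>0 \<le> y\<close> by (intro real_le_lsqrt) (auto simp: power2_eq_square algebra_simps)
  have "(y - 1) * sqrt (1 + y\<^sup>2) \<le> y\<^sup>2"
  proof (cases "y \<le> 1")
    case True
    then have "(y - 1) * sqrt (1 + y\<^sup>2) \<le> 0" by (intro mult_nonpos_nonneg) auto
    then show ?thesis using zero_le_power2[of y] by linarith
  next
    case False
    then have "(y - 1) * sqrt (1 + y\<^sup>2) \<le> (y - 1) * (1 + y)"
      using \<open>sqrt (1 + y\<^sup>2) \<le> 1 + y\<close> by (intro mult_left_mono) auto
    then show ?thesis by (simp add: power2_eq_square algebra_simps)
  qed
  then show ?thesis by (simp add: add_pos_nonneg le_divide_eq)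
qed

lemma quadratic_minus_saturated_neg_off_box:
  fixes a b c d :: real
  assumes "0 < a" "0 < d" "0 \<le> b" "0 \<le> c"
  obtains X0 Y0 where "\<And>x y. 0 \<le> x \<Longrightarrow> 0 \<le> y \<Longrightarrow> X0 < x \<or> Y0 < y \<Longrightarrow>
    - a * x\<^sup>2 + b * x + c - d * (y\<^sup>2 / sqrt (1 + y\<^sup>2)) < 0"
proof
  fix x y :: real
  assume "0 \<le> x" "0 \<le> y" and off: "max 1 ((b + c + 1) / a) < x \<or> 1 + (b\<^sup>2 / (4 * a) + c + 1) / d < y"
  have sat_nonneg: "0 \<le> d * (y\<^sup>2 / sqrt (1 + y\<^sup>2))" using \<open>0 < d\<close> by simp
  show "- a * x\<^sup>2 + b * x + c - d * (y\<^sup>2 / sqrt (1 + y\<^sup>2)) < 0"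
  proof (cases "max 1 ((b + c + 1) / a) < x")
    case True
    then have "1 < x" "b + c + 1 < a * x" using \<open>0 < a\<close> by (auto simp: divide_less_eq mult.commute)
    then have "(b + c + 1) * x < a * x\<^sup>2" by (simp add: power2_eq_square)
    moreover have "c \<le> c * x" using \<open>0 \<le> c\<close> \<open>1 < x\<close> by (simp add: mult_le_cancel_left1)
    ultimately show ?thesis using sat_nonneg \<open>1 < x\<close> by (simp add: algebra_simps)
  next
    case False
    then have "(b\<^sup>2 / (4 * a) + c + 1) / d < y - 1" using off by linarith
    then have "b\<^sup>2 / (4 * a) + c + 1 < d * (y - 1)"
      using \<open>0 < d\<close> by (simp add: divide_less_eq mult.commute)
    moreover have "d * (y - 1) \<le> d * (y\<^sup>2 / sqrt (1 + y\<^sup>2))"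
      using \<open>0 < d\<close> \<open>0 \<le> y\<close> by (intro mult_left_mono diff_1_le_square_div_sqrt) auto
    moreover have "b * x - a * x\<^sup>2 \<le> b\<^sup>2 / (4 * a)" using \<open>0 < a\<close> by (rule linear_minus_square_le)
    ultimately show ?thesis by linarith
  qed
qed

lemma se_kernel_nonneg: "0 \<le> se_kernel sf lam x x'"
  unfolding se_kernel_def by simp

lemma se_kernel_le: "se_kernel sf lam x x' \<le> sf\<^sup>2"
  unfolding se_kernel_def by (rule mult_left_le) (auto simp: divide_nonpos_nonneg)

lemma gp_mean_bounded:
  fixes X :: "'m::finite \<Rightarrow> 'a::real_normed_vector"
  obtains M where "\<And>x. \<bar>gp_mean sf lam sn X y x\<bar> \<le> M"
proof -
  define c where "c = matrix_inv ((\<chi> j k. se_kernel sf lam (X j) (X k)) + sn\<^sup>2 *\<^sub>R mat 1) *v y"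
  have kernel_vec: "norm (\<chi> j. se_kernel sf lam x (X j)) \<le> real CARD('m) * sf\<^sup>2" for x
  proof -
    have "norm (\<chi> j. se_kernel sf lam x (X j)) \<le> (\<Sum>j\<in>UNIV. \<bar>se_kernel sf lam x (X j)\<bar>)"
      using norm_le_l1_cart[of "\<chi> j. se_kernel sf lam x (X j)"] by simp
    also have "\<dots> \<le> (\<Sum>j\<in>(UNIV::'m set). sf\<^sup>2)"
      by (intro sum_mono) (simp add: se_kernel_nonneg se_kernel_le)
    finally show ?thesis by simp
  qed
  have "\<bar>gp_mean sf lam sn X y x\<bar> \<le> real CARD('m) * sf\<^sup>2 * norm c" for x
  proof -
    have "\<bar>gp_mean sf lam sn X y x\<bar> \<le> norm (\<chi> j. se_kernel sf lam x (X j)) * norm c"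
      unfolding gp_mean_def c_def[symmetric] by (rule Cauchy_Schwarz_ineq2)
    also have "\<dots> \<le> real CARD('m) * sf\<^sup>2 * norm c"
      using kernel_vec by (rule mult_right_mono) simp
    finally show ?thesis .
  qed
  then show ?thesis using that by blast
qed

lemma gp_mean_vec_bounded:
  obtains M where "\<And>x. norm (gp_mean_vec sf lam sn X Y x) \<le> M"
proof -
  have "\<forall>i. \<exists>M. \<forall>x. \<bar>gp_mean (sf i) (lam i) (sn i) X (\<chi> j. Y j $ i) x\<bar> \<le> M"
    using gp_mean_bounded by blast
  then obtain M where M: "\<And>i x. \<bar>gp_mean (sf i) (lam i) (sn i) X (\<chi> j. Y j $ i) x\<bar> \<le> M i"
    by metis
  have "norm (gp_mean_vec sf lam sn X Y x) \<le> sum M UNIV" for x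
  proof -
    have "norm (gp_mean_vec sf lam sn X Y x) \<le> (\<Sum>i\<in>UNIV. \<bar>gp_mean_vec sf lam sn X Y x $ i\<bar>)"
      by (rule norm_le_l1_cart)
    also have "\<dots> \<le> sum M UNIV"
      by (rule sum_mono) (simp add: gp_mean_vec_def M)
    finally show ?thesis .
  qed
  then show ?thesis using that by blast
qed

locale pd_error_dynamics =
  fixes e e1 e2 w :: "real \<Rightarrow> real^'n"
    and M Md Cm :: "real \<Rightarrow> real^'n^'n"
    and Kp Kd :: "real^'n^'n"
    and cM cC c1 \<delta> \<beta> lp ld :: real
  assumes e_deriv: "\<And>t. 0 \<le> t \<Longrightarrow> (e has_vector_derivative e1 t) (at t within {0..})"
    and e1_deriv: "\<And>t. 0 \<le> t \<Longrightarrow> (e1 has_vector_derivative e2 t) (at t within {0..})"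
    and M_deriv: "\<And>t. 0 \<le> t \<Longrightarrow> (M has_vector_derivative Md t) (at t within {0..})"
    and M_sym: "\<And>t. 0 \<le> t \<Longrightarrow> transpose (M t) = M t"
    and M_psd: "\<And>t x. 0 \<le> t \<Longrightarrow> 0 \<le> x \<bullet> (M t *v x)"
    and M_bounded: "\<And>t. 0 \<le> t \<Longrightarrow> mnorm (M t) \<le> cM"
    and skew: "\<And>t. 0 \<le> t \<Longrightarrow> skew_sym (Md t - 2 *\<^sub>R Cm t)"
    and Cm_bounded: "\<And>t. 0 \<le> t \<Longrightarrow> mnorm (Cm t) \<le> cC * (norm (e1 t) + c1)"
    and error_eq: "\<And>t. 0 \<le> t \<Longrightarrow> M t *v e2 t = w t - Kd *v e1 t - Kp *v e t - Cm t *v e1 t"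
    and w_bounded: "\<And>t. 0 \<le> t \<Longrightarrow> norm (w t) \<le> \<delta> + \<beta> * norm (e1 t)"
    and Kp_sym: "transpose Kp = Kp"
    and Kp_coercive: "\<And>x. lp * (norm x)\<^sup>2 \<le> x \<bullet> (Kp *v x)"
    and Kd_coercive: "\<And>x. ld * (norm x)\<^sup>2 \<le> x \<bullet> (Kd *v x)"
    and lp_pos: "0 < lp"
    and damping: "\<beta> < ld"
    and nonneg: "0 \<le> cC" "0 \<le> c1" "0 \<le> \<delta>" "0 \<le> \<beta>"
begin

lemma cM_nonneg: "0 \<le> cM"
  using M_bounded[of 0] mnorm_nonneg[of "M 0"] by simp

lemma Md_sym:
  assumes "0 \<le> t"
  shows "transpose (Md t) = Md t"
proof -
  have "((\<lambda>s. transpose (M s)) has_vector_derivative transpose (Md t)) (at t within {0..})"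
    by (rule bounded_linear.has_vector_derivative[OF bounded_linear_transpose M_deriv[OF assms]])
  then have "(M has_vector_derivative transpose (Md t)) (at t within {0..})"
    by (rule has_vector_derivative_transform[rotated 2]) (use assms M_sym in auto)
  from vector_derivative_unique_within[OF at_within_atLeast_nonbot[OF assms] M_deriv[OF assms] this]
  show ?thesis by (rule sym)
qed

text \<open>Twice the energy of the error plus a small cross term: the cross term makes the derivative
  negative in \<open>e\<close> as well, and saturating \<open>e\<close> in it keeps its contribution to the derivative
  quadratic in \<open>e1\<close>.\<close>
definition lyap :: "real \<Rightarrow> real \<Rightarrow> real" where
  "lyap \<epsilon> t = e1 t \<bullet> (M t *v e1 t) + e t \<bullet> (Kp *v e t) + \<epsilon> * (sat (e t) \<bullet> (M t *v e1 t))"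

definition lyap_deriv :: "real \<Rightarrow> real \<Rightarrow> real" where
  "lyap_deriv \<epsilon> t = 2 * (e1 t \<bullet> (w t - Kd *v e1 t))
     + \<epsilon> * (sat_deriv (e t) (e1 t) \<bullet> (M t *v e1 t) + e1 t \<bullet> (Cm t *v sat (e t))
            + sat (e t) \<bullet> (w t - Kd *v e1 t - Kp *v e t))"

lemma has_real_derivative_lyap:
  assumes "0 \<le> t"
  shows "(lyap \<epsilon> has_real_derivative lyap_deriv \<epsilon> t) (at t within {0..})"
proof -
  note e' = e_deriv[OF assms] and e1' = e1_deriv[OF assms] and M' = M_deriv[OF assms]
  have raw: "(lyap \<epsilon> has_real_derivative
      e2 t \<bullet> (M t *v e1 t) + e1 t \<bullet> (Md t *v e1 t) + e1 t \<bullet> (M t *v e2 t)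
      + (e1 t \<bullet> (Kp *v e t) + e t \<bullet> (0 *v e t) + e t \<bullet> (Kp *v e1 t))
      + \<epsilon> * (sat_deriv (e t) (e1 t) \<bullet> (M t *v e1 t) + sat (e t) \<bullet> (Md t *v e1 t)
             + sat (e t) \<bullet> (M t *v e2 t))) (at t within {0..})"
    (is "(_ has_real_derivative ?D) _")
    unfolding lyap_def[abs_def]
    by (intro DERIV_add DERIV_cmult
        has_real_derivative_inner_matrix_vector[OF e1' M' e1']
        has_real_derivative_inner_matrix_vector[OF e' has_vector_derivative_const[of Kp] e']
        has_real_derivative_inner_matrix_vector[OF has_vector_derivative_sat[OF e'] M' e1'])
  have split: "u \<bullet> (Md t *v v) = u \<bullet> (Cm t *v v) + v \<bullet> (Cm t *v u)" for u v
    by (rule skew_sym_split_inner[OF Md_sym[OF assms] skew[OF assms]])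
  have M_e2: "u \<bullet> (M t *v e2 t) = u \<bullet> w t - u \<bullet> (Kd *v e1 t) - u \<bullet> (Kp *v e t) - u \<bullet> (Cm t *v e1 t)"
    for u by (simp add: error_eq[OF assms] inner_diff_right)
  have M_sym_e: "e2 t \<bullet> (M t *v e1 t) = e1 t \<bullet> (M t *v e2 t)"
    by (rule inner_matrix_vector_sym[OF M_sym[OF assms]])
  have Kp_sym_e: "e1 t \<bullet> (Kp *v e t) = e t \<bullet> (Kp *v e1 t)"
    by (rule inner_matrix_vector_sym[OF Kp_sym])
  have energy: "e2 t \<bullet> (M t *v e1 t) + e1 t \<bullet> (Md t *v e1 t) + e1 t \<bullet> (M t *v e2 t)
      + (e1 t \<bullet> (Kp *v e t) + e t \<bullet> (0 *v e t) + e t \<bullet> (Kp *v e1 t))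
      = 2 * (e1 t \<bullet> (w t - Kd *v e1 t))"
    using split[of "e1 t" "e1 t"] M_sym_e M_e2[of "e1 t"] Kp_sym_e inner_diff_right[of "e1 t" "w t" "Kd *v e1 t"]
      inner_zero_right[of "e t", folded matrix_vector_mult_0[of "e t"]]
    by linarith
  have cross: "sat_deriv (e t) (e1 t) \<bullet> (M t *v e1 t) + sat (e t) \<bullet> (Md t *v e1 t)
      + sat (e t) \<bullet> (M t *v e2 t)
      = sat_deriv (e t) (e1 t) \<bullet> (M t *v e1 t) + e1 t \<bullet> (Cm t *v sat (e t))
        + sat (e t) \<bullet> (w t - Kd *v e1 t - Kp *v e t)"
    using split[of "sat (e t)" "e1 t"] M_e2[of "sat (e t)"]
      inner_diff_right[of "sat (e t)" "w t - Kd *v e1 t" "Kp *v e t"]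
      inner_diff_right[of "sat (e t)" "w t" "Kd *v e1 t"]
    by linarith
  have "?D = lyap_deriv \<epsilon> t"
    by (simp only: lyap_deriv_def energy cross)
  with raw show ?thesis by (rule DERIV_cong)
qed

lemma damping_term_le:
  assumes "0 \<le> t"
  shows "e1 t \<bullet> (w t - Kd *v e1 t) \<le> - (ld - \<beta>) * (norm (e1 t))\<^sup>2 + \<delta> * norm (e1 t)"
proof -
  have "e1 t \<bullet> w t \<le> norm (e1 t) * norm (w t)" by (rule norm_cauchy_schwarz)
  also have "\<dots> \<le> norm (e1 t) * (\<delta> + \<beta> * norm (e1 t))"
    using w_bounded[OF assms] by (rule mult_left_mono) simp
  finally have "e1 t \<bullet> w t \<le> norm (e1 t) * (\<delta> + \<beta> * norm (e1 t))" .
  moreover have "ld * (norm (e1 t))\<^sup>2 \<le> e1 t \<bullet> (Kd *v e1 t)" by (rule Kd_coercive)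
  ultimately show ?thesis by (simp add: inner_diff_right power2_eq_square algebra_simps)
qed

lemma cross_term_deriv_le:
  assumes "0 \<le> t"
  defines "x \<equiv> norm (e1 t)" and "y \<equiv> norm (e t)"
  shows "sat_deriv (e t) (e1 t) \<bullet> (M t *v e1 t) + e1 t \<bullet> (Cm t *v sat (e t))
      + sat (e t) \<bullet> (w t - Kd *v e1 t - Kp *v e t)
    \<le> (cM + cC) * x\<^sup>2 + (cC * c1 + \<beta> + mnorm Kd) * x + \<delta> - lp * (y\<^sup>2 / sqrt (1 + y\<^sup>2))"
proof -
  have x: "0 \<le> x" by (simp add: x_def)
  have sat_e: "norm (sat (e t)) \<le> 1" by (rule norm_sat_le_1)
  have "sat_deriv (e t) (e1 t) \<bullet> (M t *v e1 t) \<le> mnorm (M t) * norm (sat_deriv (e t) (e1 t)) * x"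
    unfolding x_def by (rule abs_le_D1[OF abs_inner_matrix_vector_le])
  also have "\<dots> \<le> cM * x * x"
    using M_bounded[OF assms(1)] norm_sat_deriv_le[of "e t" "e1 t"] mnorm_nonneg cM_nonneg x
    by (intro mult_mono) (auto simp: x_def)
  finally have b1: "sat_deriv (e t) (e1 t) \<bullet> (M t *v e1 t) \<le> cM * x\<^sup>2"
    by (simp add: power2_eq_square)
  have "e1 t \<bullet> (Cm t *v sat (e t)) \<le> mnorm (Cm t) * x * norm (sat (e t))"
    unfolding x_def by (rule abs_le_D1[OF abs_inner_matrix_vector_le])
  also have "\<dots> \<le> cC * (x + c1) * x * 1"
    using Cm_bounded[OF assms(1)] sat_e mnorm_nonneg x nonneg by (intro mult_mono) (auto simp: x_def)
  finally have b2: "e1 t \<bullet> (Cm t *v sat (e t)) \<le> cC * x\<^sup>2 + cC * c1 * x"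
    by (simp add: power2_eq_square algebra_simps)
  have "sat (e t) \<bullet> w t \<le> norm (sat (e t)) * norm (w t)" by (rule norm_cauchy_schwarz)
  also have "\<dots> \<le> 1 * (\<delta> + \<beta> * x)"
    using sat_e w_bounded[OF assms(1)] by (intro mult_mono) (auto simp: x_def)
  finally have b3: "sat (e t) \<bullet> w t \<le> \<delta> + \<beta> * x" by simp
  have "- (sat (e t) \<bullet> (Kd *v e1 t)) \<le> mnorm Kd * norm (sat (e t)) * x"
    unfolding x_def by (rule abs_le_D2[OF abs_inner_matrix_vector_le])
  also have "\<dots> \<le> mnorm Kd * 1 * x"
    using sat_e mnorm_nonneg x by (intro mult_mono) auto
  finally have b4: "- (sat (e t) \<bullet> (Kd *v e1 t)) \<le> mnorm Kd * x" by simp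
  have "sat (e t) \<bullet> (Kp *v e t) = (e t \<bullet> (Kp *v e t)) / sqrt (1 + y\<^sup>2)"
    by (simp add: sat_def y_def power2_norm_eq_inner inverse_eq_divide)
  moreover have "lp * y\<^sup>2 \<le> e t \<bullet> (Kp *v e t)" using Kp_coercive by (simp add: y_def)
  ultimately have b5: "lp * (y\<^sup>2 / sqrt (1 + y\<^sup>2)) \<le> sat (e t) \<bullet> (Kp *v e t)"
    by (simp add: divide_right_mono)
  show ?thesis using b1 b2 b3 b4 b5 by (simp add: inner_diff_right algebra_simps)
qed

lemma lyap_deriv_le:
  assumes "0 \<le> t" "0 \<le> \<epsilon>"
  defines "x \<equiv> norm (e1 t)" and "y \<equiv> norm (e t)"
  shows "lyap_deriv \<epsilon> t \<le> - (2 * (ld - \<beta>) - \<epsilon> * (cM + cC)) * x\<^sup>2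
    + (2 * \<delta> + \<epsilon> * (cC * c1 + \<beta> + mnorm Kd)) * x + \<epsilon> * \<delta> - \<epsilon> * lp * (y\<^sup>2 / sqrt (1 + y\<^sup>2))"
proof -
  from mult_left_mono[OF cross_term_deriv_le[OF assms(1)] assms(2)]
  have "\<epsilon> * (sat_deriv (e t) (e1 t) \<bullet> (M t *v e1 t) + e1 t \<bullet> (Cm t *v sat (e t))
      + sat (e t) \<bullet> (w t - Kd *v e1 t - Kp *v e t))
    \<le> \<epsilon> * (cM + cC) * x\<^sup>2 + \<epsilon> * (cC * c1 + \<beta> + mnorm Kd) * x + \<epsilon> * \<delta>
      - \<epsilon> * lp * (y\<^sup>2 / sqrt (1 + y\<^sup>2))"
    by (simp add: x_def y_def algebra_simps)
  with damping_term_le[OF assms(1)] show ?thesis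
    unfolding lyap_deriv_def x_def y_def by (simp add: algebra_simps)
qed

lemma lyap_le:
  assumes "0 \<le> t" "0 \<le> \<epsilon>"
  shows "lyap \<epsilon> t \<le> cM * (norm (e1 t))\<^sup>2 + mnorm Kp * (norm (e t))\<^sup>2 + \<epsilon> * cM * norm (e1 t)"
proof -
  have "e1 t \<bullet> (M t *v e1 t) \<le> mnorm (M t) * norm (e1 t) * norm (e1 t)"
    by (rule abs_le_D1[OF abs_inner_matrix_vector_le])
  also have "\<dots> \<le> cM * norm (e1 t) * norm (e1 t)"
    using M_bounded[OF assms(1)] by (intro mult_right_mono) auto
  finally have kinetic: "e1 t \<bullet> (M t *v e1 t) \<le> cM * (norm (e1 t))\<^sup>2"
    by (simp add: power2_eq_square mult.assoc)
  have "e t \<bullet> (Kp *v e t) \<le> mnorm Kp * norm (e t) * norm (e t)"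
    by (rule abs_le_D1[OF abs_inner_matrix_vector_le])
  then have potential: "e t \<bullet> (Kp *v e t) \<le> mnorm Kp * (norm (e t))\<^sup>2"
    by (simp add: power2_eq_square mult.assoc)
  have "sat (e t) \<bullet> (M t *v e1 t) \<le> mnorm (M t) * norm (sat (e t)) * norm (e1 t)"
    by (rule abs_le_D1[OF abs_inner_matrix_vector_le])
  also have "\<dots> \<le> cM * 1 * norm (e1 t)"
    using M_bounded[OF assms(1)] norm_sat_le_1 mnorm_nonneg cM_nonneg by (intro mult_mono) auto
  finally have "\<epsilon> * (sat (e t) \<bullet> (M t *v e1 t)) \<le> \<epsilon> * (cM * norm (e1 t))"
    using assms(2) by (simp add: mult_left_mono)
  with kinetic potential show ?thesis
    unfolding lyap_def by (simp add: mult.assoc)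
qed

lemma lyap_ge:
  assumes "0 \<le> t"
  shows "lp * (norm (e t))\<^sup>2 - \<epsilon>\<^sup>2 * cM / 4 \<le> lyap \<epsilon> t"
proof -
  define z where "z = e1 t + (\<epsilon> / 2) *\<^sub>R sat (e t)"
  have "z \<bullet> (M t *v z) = e1 t \<bullet> (M t *v e1 t) + \<epsilon> * (sat (e t) \<bullet> (M t *v e1 t))
      + \<epsilon>\<^sup>2 / 4 * (sat (e t) \<bullet> (M t *v sat (e t)))"
    using inner_matrix_vector_sym[OF M_sym[OF assms], of "e1 t" "sat (e t)"]
    by (simp add: z_def matrix_vector_right_distrib matrix_vector_mult_scaleR inner_add_left
        inner_add_right algebra_simps power2_eq_square)
  moreover have "0 \<le> z \<bullet> (M t *v z)" by (rule M_psd[OF assms])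
  moreover have "sat (e t) \<bullet> (M t *v sat (e t)) \<le> mnorm (M t) * norm (sat (e t)) * norm (sat (e t))"
    by (rule abs_le_D1[OF abs_inner_matrix_vector_le])
  moreover have "\<dots> \<le> cM * 1 * 1"
    using M_bounded[OF assms] norm_sat_le_1 mnorm_nonneg cM_nonneg by (intro mult_mono) auto
  ultimately have "- (\<epsilon>\<^sup>2 * cM / 4) \<le> e1 t \<bullet> (M t *v e1 t) + \<epsilon> * (sat (e t) \<bullet> (M t *v e1 t))"
    using mult_left_mono[of "sat (e t) \<bullet> (M t *v sat (e t))" cM "\<epsilon>\<^sup>2 / 4"] by simp
  moreover have "lp * (norm (e t))\<^sup>2 \<le> e t \<bullet> (Kp *v e t)" by (rule Kp_coercive)
  ultimately show ?thesis unfolding lyap_def by simp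
qed

text \<open>By \<open>lyap_le\<close>, large values of the Lyapunov function only occur when \<open>(\<parallel>e1\<parallel>, \<parallel>e\<parallel>)\<close> lies
  outside a box, where \<open>lyap_deriv_le\<close> makes the derivative negative.\<close>
lemma lyap_bounded_above:
  assumes "0 < \<epsilon>" "\<epsilon> * (cM + cC) \<le> ld - \<beta>"
  obtains R where "\<And>t. 0 \<le> t \<Longrightarrow> lyap \<epsilon> t \<le> R"
proof -
  define k where "k = cC * c1 + \<beta> + mnorm Kd"
  have "0 \<le> k" using nonneg mnorm_nonneg[of Kd] by (simp add: k_def)
  then obtain X0 Y0 where off_box: "\<And>x y. 0 \<le> x \<Longrightarrow> 0 \<le> y \<Longrightarrow> X0 < x \<or> Y0 < y \<Longrightarrow>
      - (ld - \<beta>) * x\<^sup>2 + (2 * \<delta> + \<epsilon> * k) * x + \<epsilon> * \<delta> - \<epsilon> * lp * (y\<^sup>2 / sqrt (1 + y\<^sup>2)) < 0"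
    using quadratic_minus_saturated_neg_off_box[of "ld - \<beta>" "\<epsilon> * lp" "2 * \<delta> + \<epsilon> * k" "\<epsilon> * \<delta>"]
      assms(1) damping lp_pos nonneg by (auto simp: mult.assoc)
  define R where "R = cM * X0\<^sup>2 + mnorm Kp * Y0\<^sup>2 + \<epsilon> * cM * X0"
  have "lyap_deriv \<epsilon> t < 0" if "0 \<le> t" "R < lyap \<epsilon> t" for t
  proof -
    have "X0 < norm (e1 t) \<or> Y0 < norm (e t)"
    proof (rule ccontr)
      assume "\<not> ?thesis"
      then have "norm (e1 t) \<le> X0" "norm (e t) \<le> Y0" by auto
      then have "cM * (norm (e1 t))\<^sup>2 + mnorm Kp * (norm (e t))\<^sup>2 + \<epsilon> * cM * norm (e1 t) \<le> R"
        unfolding R_def using cM_nonneg mnorm_nonneg assms(1)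
        by (intro add_mono mult_left_mono power_mono) auto
      then show False using lyap_le[OF that(1), of \<epsilon>] assms(1) that(2) by simp
    qed
    from off_box[OF _ _ this]
    have "- (ld - \<beta>) * (norm (e1 t))\<^sup>2 + (2 * \<delta> + \<epsilon> * k) * norm (e1 t) + \<epsilon> * \<delta>
        - \<epsilon> * lp * ((norm (e t))\<^sup>2 / sqrt (1 + (norm (e t))\<^sup>2)) < 0" by simp
    moreover have "- (2 * (ld - \<beta>) - \<epsilon> * (cM + cC)) * (norm (e1 t))\<^sup>2 \<le> - (ld - \<beta>) * (norm (e1 t))\<^sup>2"
      using assms(2) by (intro mult_right_mono) auto
    moreover have "lyap_deriv \<epsilon> t \<le> - (2 * (ld - \<beta>) - \<epsilon> * (cM + cC)) * (norm (e1 t))\<^sup>2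
        + (2 * \<delta> + \<epsilon> * k) * norm (e1 t) + \<epsilon> * \<delta>
        - \<epsilon> * lp * ((norm (e t))\<^sup>2 / sqrt (1 + (norm (e t))\<^sup>2))"
      unfolding k_def using lyap_deriv_le[OF that(1)] assms(1) by simp
    ultimately show ?thesis by linarith
  qed
  then have "lyap \<epsilon> t \<le> max (lyap \<epsilon> 0) R" if "0 \<le> t" for t
    using le_max_if_deriv_neg_above[OF has_real_derivative_lyap _ that] by blast
  then show ?thesis using that by blast
qed

theorem error_bounded: "\<exists>B. \<forall>t\<ge>0. norm (e t) \<le> B"
proof -
  define \<epsilon> where "\<epsilon> = (ld - \<beta>) / (cM + cC + 1)"
  have "0 < \<epsilon>" using damping cM_nonneg nonneg by (simp add: \<epsilon>_def)
  moreover have "\<epsilon> * (cM + cC) \<le> ld - \<beta>"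
    using damping cM_nonneg nonneg by (simp add: \<epsilon>_def field_simps)
  ultimately obtain R where R: "\<And>t. 0 \<le> t \<Longrightarrow> lyap \<epsilon> t \<le> R"
    using lyap_bounded_above by blast
  have "norm (e t) \<le> sqrt ((R + \<epsilon>\<^sup>2 * cM / 4) / lp)" if "0 \<le> t" for t
  proof -
    have "lp * (norm (e t))\<^sup>2 \<le> R + \<epsilon>\<^sup>2 * cM / 4" using lyap_ge[OF that, of \<epsilon>] R[OF that] by simp
    then show ?thesis using lp_pos by (simp add: real_le_rsqrt pos_le_divide_eq mult.commute)
  qed
  then show ?thesis by blast
qed

end

lemma manipulator_tracking_error_bounded:
  fixes H Hh :: "real^'n \<Rightarrow> real^'n^'n"
    and C Ch :: "real^'n \<Rightarrow> real^'n \<Rightarrow> real^'n^'n"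
    and g gh :: "real^'n \<Rightarrow> real^'n"
    and DH :: "real^'n \<Rightarrow> real^'n \<Rightarrow> real^'n^'n"
    and qd qd1 qd2 q q1 q2 \<mu> :: "real \<Rightarrow> real^'n"
  assumes H_pd: "\<forall>x. sym_pos_def (H x)"
    and H_deriv: "\<forall>x. (H has_derivative DH x) (at x)"
    and skew: "\<forall>x v. skew_sym (DH x v - 2 *\<^sub>R C x v)"
    and H_bounded: "\<forall>x. mnorm (H x) \<le> cH"
    and C_bounded: "\<forall>x v. mnorm (C x v) \<le> cC * norm v"
    and qd_deriv: "\<forall>t\<ge>0. (qd has_vector_derivative qd1 t) (at t within {0..})"
      "\<forall>t\<ge>0. (qd1 has_vector_derivative qd2 t) (at t within {0..})"
    and qd1_bounded: "\<forall>t\<ge>0. norm (qd1 t) < cq1"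
    and gains: "sym_pos_def Kp" "sym_pos_def Kd" "sigma_min Kd > \<beta>"
    and nonneg: "\<alpha> \<ge> 0" "\<beta> \<ge> 0"
    and model_error: "\<forall>t\<ge>0. \<forall>x v.
      norm (H x *v qd2 t + C x v *v qd1 t + g x - Hh x *v qd2 t - Ch x v *v qd1 t - gh x)
        \<le> \<alpha> + \<beta> * norm v"
    and q_deriv: "\<forall>t\<ge>0. (q has_vector_derivative q1 t) (at t within {0..})"
      "\<forall>t\<ge>0. (q1 has_vector_derivative q2 t) (at t within {0..})"
    and \<mu>_bounded: "\<forall>t\<ge>0. norm (\<mu> t) \<le> c\<mu>"
    and closed_loop: "\<forall>t\<ge>0.
      H (q t) *v q2 t + C (q t) (q1 t) *v q1 t + g (q t) =
        Hh (q t) *v qd2 t + Ch (q t) (q1 t) *v qd1 t + gh (q t) + \<mu> t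
        - Kd *v (q1 t - qd1 t) - Kp *v (q t - qd t)"
  shows "\<exists>B. \<forall>t\<ge>0. norm (q t - qd t) \<le> B"
proof -
  obtain lp where lp: "0 < lp" "\<And>x. lp * (norm x)\<^sup>2 \<le> x \<bullet> (Kp *v x)"
    using sym_pos_def_coercive[OF gains(1)] by blast
  obtain ld where ld: "\<And>x. ld * (norm x)\<^sup>2 \<le> x \<bullet> (Kd *v x)" "sigma_min Kd \<le> ld"
    using sym_pos_def_coercive[OF gains(2)] by blast
  have "0 \<le> mnorm (C 0 (axis undefined 1))" by (rule mnorm_nonneg)
  also have "\<dots> \<le> cC * norm (axis undefined 1 :: real^'n)" using C_bounded by blast
  finally have "0 \<le> cC" by simp
  have "0 \<le> cq1" using qd1_bounded[rule_format, OF order.refl] norm_ge_zero[of "qd1 0"] by linarith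
  have "0 \<le> c\<mu>" using \<mu>_bounded[rule_format, OF order.refl] norm_ge_zero[of "\<mu> 0"] by linarith
  let ?F = "\<lambda>t. H (q t) *v qd2 t + C (q t) (q1 t) *v qd1 t + g (q t)
                - Hh (q t) *v qd2 t - Ch (q t) (q1 t) *v qd1 t - gh (q t)"
  interpret pd_error_dynamics "\<lambda>t. q t - qd t" "\<lambda>t. q1 t - qd1 t" "\<lambda>t. q2 t - qd2 t"
    "\<lambda>t. \<mu> t - ?F t" "\<lambda>t. H (q t)" "\<lambda>t. DH (q t) (q1 t)" "\<lambda>t. C (q t) (q1 t)" Kp Kd
    cH cC cq1 "c\<mu> + \<alpha> + \<beta> * cq1" \<beta> lp ld
  proof
    fix t :: real
    assume "0 \<le> t"
    have q1: "norm (q1 t) \<le> norm (q1 t - qd1 t) + cq1"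
      using norm_triangle_sub[of "q1 t" "qd1 t"] qd1_bounded \<open>0 \<le> t\<close> by fastforce
    show "((\<lambda>t. q t - qd t) has_vector_derivative q1 t - qd1 t) (at t within {0..})"
      "((\<lambda>t. q1 t - qd1 t) has_vector_derivative q2 t - qd2 t) (at t within {0..})"
      using q_deriv qd_deriv \<open>0 \<le> t\<close> by (auto intro: has_vector_derivative_diff)
    show "((\<lambda>t. H (q t)) has_vector_derivative DH (q t) (q1 t)) (at t within {0..})"
      using q_deriv(1) H_deriv \<open>0 \<le> t\<close> by (auto intro: has_vector_derivative_comp_has_derivative)
    show "mnorm (C (q t) (q1 t)) \<le> cC * (norm (q1 t - qd1 t) + cq1)"
      using C_bounded mult_left_mono[OF q1 \<open>0 \<le> cC\<close>] by (blast intro: order_trans)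
    show "H (q t) *v (q2 t - qd2 t)
        = \<mu> t - ?F t - Kd *v (q1 t - qd1 t) - Kp *v (q t - qd t) - C (q t) (q1 t) *v (q1 t - qd1 t)"
      using closed_loop \<open>0 \<le> t\<close> by (simp add: matrix_vector_mult_diff_distrib algebra_simps)
    have "norm (\<mu> t - ?F t) \<le> norm (\<mu> t) + norm (?F t)" by (rule norm_triangle_ineq4)
    also have "\<dots> \<le> c\<mu> + (\<alpha> + \<beta> * norm (q1 t))"
      using \<mu>_bounded model_error \<open>0 \<le> t\<close> by (intro add_mono) auto
    also have "\<dots> \<le> c\<mu> + \<alpha> + \<beta> * cq1 + \<beta> * norm (q1 t - qd1 t)"
      using mult_left_mono[OF q1 nonneg(2)] by (simp add: algebra_simps)
    finally show "norm (\<mu> t - ?F t) \<le> c\<mu> + \<alpha> + \<beta> * cq1 + \<beta> * norm (q1 t - qd1 t)" .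
  qed (use H_pd skew H_bounded gains lp ld nonneg \<open>0 \<le> cC\<close> \<open>0 \<le> cq1\<close> \<open>0 \<le> c\<mu>\<close>
       in \<open>auto simp: sym_pos_def_def sym_pos_def_psd\<close>)
  from error_bounded show ?thesis by simp
qed

theorem corollary1:
  fixes H Hh :: "real^'n \<Rightarrow> real^'n^'n"
    and C Ch :: "real^'n \<Rightarrow> real^'n \<Rightarrow> real^'n^'n"
    and g gh :: "real^'n \<Rightarrow> real^'n"
    and DH :: "real^'n \<Rightarrow> real^'n \<Rightarrow> real^'n^'n"
    and qd qd1 qd2 q q1 q2 :: "real \<Rightarrow> real^'n"
    and Kp Kd :: "real^'n^'n"
    and X :: "'m::finite \<Rightarrow> (real^'n) \<times> (real^'n) \<times> (real^'n)"
    and Y :: "'m \<Rightarrow> real^'n"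
    and sf lam sn :: "'n \<Rightarrow> real"
    and L cC cq cq1 cq2 \<alpha> \<beta> :: real
  assumes rot_H: "\<forall>x i. H (x + (2 * pi) *\<^sub>R axis i 1) = H x"
    and rot_C: "\<forall>x v i. C (x + (2 * pi) *\<^sub>R axis i 1) v = C x v"
    and rot_g: "\<forall>x i. g (x + (2 * pi) *\<^sub>R axis i 1) = g x"
    and P1_pd: "\<forall>x. sym_pos_def (H x)"
    and P1_diff: "\<forall>x. (H has_derivative DH x) (at x)"
    and P1_skew: "\<forall>x v. skew_sym (DH x v - 2 *\<^sub>R C x v)"
    and P2_bdd: "\<exists>cH. \<forall>x. mnorm (H x) \<le> cH"
    and P2_L: "L > 0" "\<forall>x x'. mnorm (H x - H x') \<le> L * norm (x - x')"
    and P2_C: "\<forall>x v. mnorm (C x v) \<le> cC * norm v"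
    and P2_Csym: "\<forall>x v p. C x v *v p = C x p *v v"
    and C1_deriv: "\<forall>t\<ge>0. (qd has_vector_derivative qd1 t) (at t within {0..})"
                  "\<forall>t\<ge>0. (qd1 has_vector_derivative qd2 t) (at t within {0..})"
    and C1_bdd: "\<forall>t\<ge>0. norm (qd t) < cq" "\<forall>t\<ge>0. norm (qd1 t) < cq1"
                "\<forall>t\<ge>0. norm (qd2 t) < cq2"
    and C2: "sym_pos_def Kp" "sym_pos_def Kd" "sigma_min Kd > \<beta>"
    and C3_nonneg: "\<alpha> \<ge> 0" "\<beta> \<ge> 0"
    and C3_bound: "\<forall>t\<ge>0. \<forall>x v.
        norm (H x *v qd2 t + C x v *v qd1 t + g x - Hh x *v qd2 t - Ch x v *v qd1 t - gh x)
          \<le> \<alpha> + \<beta> * norm v"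
    and C3_cont: "continuous_on UNIV
        (\<lambda>(a, b, v, x). H x *v a + C x v *v b + g x - Hh x *v a - Ch x v *v b - gh x)"
    and GP_hyp: "\<forall>i. sf i > 0" "\<forall>i. lam i > 0"
    and traj_deriv: "\<forall>t\<ge>0. (q has_vector_derivative q1 t) (at t within {0..})"
                    "\<forall>t\<ge>0. (q1 has_vector_derivative q2 t) (at t within {0..})"
    and closed_loop: "\<forall>t\<ge>0.
        H (q t) *v q2 t + C (q t) (q1 t) *v q1 t + g (q t) =
          Hh (q t) *v qd2 t + Ch (q t) (q1 t) *v qd1 t + gh (q t)
          + gp_mean_vec sf lam sn X Y (qd2 t, qd1 t, q t)
          - Kd *v (q1 t - qd1 t) - Kp *v (q t - qd t)"
  shows "\<exists>B. \<forall>t\<ge>0. norm (q t - qd t) \<le> B"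
proof -
  \<comment> \<open>The GP posterior mean enters only through its boundedness.\<close>
  obtain cH where "\<forall>x. mnorm (H x) \<le> cH" using P2_bdd by blast
  moreover obtain c\<mu> where "\<And>x. norm (gp_mean_vec sf lam sn X Y x) \<le> c\<mu>"
    using gp_mean_vec_bounded by blast
  ultimately show ?thesis
    by (intro manipulator_tracking_error_bounded[OF P1_pd P1_diff P1_skew _ P2_C C1_deriv
        C1_bdd(2) C2 C3_nonneg C3_bound traj_deriv _ closed_loop]) auto
qed

end
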